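(* Let ${\bf w}^*=({\bf x}^*;{\bf z}^* )$ be a P-stationary point of (P) with some $\tau\in(0,\tau_* )$, $\tau_*:=\min\{\tau_1,\tau_2\}$. Assume: $\nabla^2 f({\bf x}^* )$ is nonsingular; $A_{\Gamma_*}$ has full row rank; $H(\Gamma)$ is nonsingular for every $\Gamma\subseteq\Gamma_*$ (equivalently $c_*>0$); and $\nabla^2 f$ is Lipschitz continuous with constant $L_*>0$ on a neighbourhood of ${\bf x}^*$. Let $\rho>0$, $\alpha\in(0,1)$, $0<\mu_{-1}\le c_*/2$, and set $\theta_*:=L_*+2\rho C_*$. Then there exists $\delta>0$ such that, for every initial point ${\bf w}^0\in N({\bf w}^*,\delta)$, the Newton iteration below is well defined for all $k\ge0$ (i.e. $\nabla F_{\mu_k}({\bf w}^k;T_k)$ is nonsingular for every $k$) and: (a) ${\bf d}^k\to0$ and ${\bf w}^k\to{\bf w}^*$; (b) $\|{\bf w}^{k+1}-{\bf w}^*\|\le(\theta_*/c_* )\|{\bf w}^k-{\bf w}^*\|^2$ for all $k\ge0$; (c) $\|F({\bf w}^{k+1};T_{k+1})\|\le\theta_*C_*c_*^{-3}\|F({\bf w}^k;T_k)\|^2$ for all $k\ge0$; moreover, for every $k\ge1$, $\|F({\bf w}^k;T_k)\|\le\theta_*C_*^3c_*^{-3}\,2^{2-2k}\|{\bf w}^0-{\bf w}^*\|^2$, so that for any $\epsilon>0$ and ${\bf w}^0\ne{\bf w}^*$ one has $\|F({\bf w}^k;T_k)\|\le\epsilon$ whenever $k\ge1$ and $k\ge\big\lceil\log_2\big(2\sqrt{\theta_*(C_*/c_*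 )^3}\,\|{\bf w}^0-{\bf w}^*\|\big)-\log_2\sqrt{\epsilon}\,\big\rceil$. The iteration: given ${\bf w}^k=({\bf x}^k;{\bf z}^k)$, set $T_k:={\mathcal S}({\bf w}^k)\cup{\mathcal E}^o({\bf w}^k)$, $\mu_k:=\min\{\alpha\mu_{k-1},\rho\|F({\bf w}^k;T_k)\|\}$, let ${\bf d}^k$ solve $\nabla F_{\mu_k}({\bf w}^k;T_k)\,{\bf d}=-F({\bf w}^k;T_k)$, and set ${\bf w}^{k+1}:={\bf w}^k+{\bf d}^k$.
   Context: Standing setting: problem (P) is $\min_{{\bf x}\in\mathbb{R}^n} f({\bf x})+\lambda\|(A{\bf x}+{\bf b})_+\|_0$ with $f$ twice continuously differentiable, $\lambda>0$, $A\in\mathbb{R}^{m\times n}$ with rows $A_i$, ${\bf b}\in\mathbb{R}^m$; ${\bf z}_+$ componentwise positive part, $\|\cdot\|_0$ counts nonzeros; $A_\Gamma$, ${\bf z}_\Gamma$ row-submatrix/subvector indexed by $\Gamma$, $\overline\Gamma$ complement in $\{1,\dots,m\}$; $\|\cdot\|$ Euclidean/spectral norm, $\sigma_{\min}$ smallest singular value; $N({\bf w}^*,\delta)$ open ball in $\mathbb{R}^{n+m}$. $\mathrm{Prox}_{\alpha\|(\cdot)_+\|_0}({\bf z}):=\arg\min_{{\bf y}}\frac12\|{\bf y}-{\bf z}\|^2+\alpha\|{\bf y}_+\|_0$. $({\bf x}^*,{\bf z}^* )$ is P-stationary with $\tau$ if $\nabla f({\bf x}^* )+A^\top{\bf z}^*=0$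 and $A{\bf x}^*+{\bf b}\in\mathrm{Prox}_{\tau\lambda\|(\cdot)_+\|_0}(A{\bf x}^*+{\bf b}+\tau{\bf z}^* )$. $\Gamma_*:=\{i:A_i{\bf x}^*+b_i=0\}$, ${\bf y}^*:=A{\bf x}^*+{\bf b}$, ${\bf p}^*:=-(A_{\Gamma_*}A_{\Gamma_*}^\top)^{-1}A_{\Gamma_*}\nabla f({\bf x}^* )$; $\tau_1:=+\infty$ if ${\bf y}^*\le0$, else $\min\{(y_i^* )^2/(2\lambda):y_i^*>0\}$; $\tau_2:=+\infty$ if $\Gamma_*=\emptyset$ or ${\bf p}^*=0$, else $2\lambda/\max_i|p_i^*|^2$. Index sets for ${\bf w}=({\bf x};{\bf z})$, $c:=\sqrt{\tau\lambda/2}$: ${\mathcal S}({\bf w})=\{i:|A_i{\bf x}+b_i+\tau z_i-c|<c\}$, ${\mathcal E}^o({\bf w})=\{i:A_i{\bf x}+b_i=0,\ |\tau z_i-c|=c\}$. $F({\bf w};\Gamma):=\big(\nabla f({\bf x})+A_\Gamma^\top{\bf z}_\Gamma;\ A_\Gamma{\bf x}+{\bf b}_\Gamma;\ {\bf z}_{\overline\Gamma}\big)\in\mathbb{R}^{n+m}$; for $\mu\ge0$, $\nabla F_\mu({\bf w};\Gamma)$ is the matrix which, in block form with respect to the variable partition $({\bf x},{\bf z}_\Gamma,{\bf z}_{\overline\Gamma})$, equals $\begin{bmatrix}\nabla^2 f({\bf x}) & A_\Gamma^\top & 0\\ A_\Gamma & -\mu I & 0\\ 0 & 0 & I\end{bmatrix}$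 (so $\nabla F_0$ is the Jacobian of $F(\cdot;\Gamma)$). $H(\Gamma):=\begin{bmatrix}\nabla^2 f({\bf x}^* ) & A_\Gamma^\top\\ A_\Gamma & 0\end{bmatrix}$; $C_*:=2\max\{1,\|H(\Gamma_* )\|\}$, $c_*:=\frac12\min\{1,\min_{\Gamma\subseteq\Gamma_*}\sigma_{\min}(H(\Gamma))\}$. *)

theory Defs
  imports "HOL-Analysis.Analysis"
begin

text \<open>Vectors w = (x;z) in R^(n+m) are represented as real^('n + 'm):
 component Inl i is x_i, component Inr l is z_l.\<close>

definition xpart :: "real^('n::finite + 'm::finite) \<Rightarrow> real^'n" where
  "xpart w = (\<chi> i. w $ Inl i)"

definition zpart :: "real^('n::finite + 'm::finite) \<Rightarrow> real^'m" where
  "zpart w = (\<chi> l. w $ Inr l)"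

definition join :: "real^'n::finite \<Rightarrow> real^'m::finite \<Rightarrow> real^('n + 'm)" where
  "join x z = (\<chi> k. case k of Inl i \<Rightarrow> x $ i | Inr l \<Rightarrow> z $ l)"

definition pos0 :: "real^'m::finite \<Rightarrow> nat" where
  "pos0 y = card {i. y $ i > 0}"

definition proxset :: "real \<Rightarrow> real^'m::finite \<Rightarrow> (real^'m) set" where
  "proxset a z = {y. \<forall>y'. (1/2) * (norm (y - z))\<^sup>2 + a * real (pos0 y)
                         \<le> (1/2) * (norm (y' - z))\<^sup>2 + a * real (pos0 y')}"

text \<open>P-stationarity with parameter tau; g is the gradient of f\<close>
definition Pstationary ::
  "(real^'n \<Rightarrow> real^'n) \<Rightarrow> real^'n::finite^'m::finite \<Rightarrow> real^'m \<Rightarrow> real \<Rightarrow> real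
     \<Rightarrow> real^'n \<Rightarrow> real^'m \<Rightarrow> bool" where
  "Pstationary g A b lam tau x z \<longleftrightarrow>
     g x + transpose A *v z = 0 \<and>
     A *v x + b \<in> proxset (tau * lam) (A *v x + b + tau *\<^sub>R z)"

definition GammaStar :: "real^'n::finite^'m::finite \<Rightarrow> real^'m \<Rightarrow> real^'n \<Rightarrow> 'm set" where
  "GammaStar A b x = {i. (A *v x + b) $ i = 0}"

definition full_row_rank :: "real^'n::finite^'m::finite \<Rightarrow> 'm set \<Rightarrow> bool" where
  "full_row_rank A G \<longleftrightarrow> (\<forall>c. (\<Sum>i\<in>G. c i *\<^sub>R (A $ i)) = 0 \<longrightarrow> (\<forall>i\<in>G. c i = 0))"

text \<open>p* = -(A_G A_G^T)^{-1} A_G grad f(x*), stored as an m-vector supported on G = Gamma_*\<close>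
definition pstar :: "(real^'n \<Rightarrow> real^'n) \<Rightarrow> real^'n::finite^'m::finite \<Rightarrow> real^'m
     \<Rightarrow> real^'n \<Rightarrow> real^'m" where
  "pstar g A b x = (THE p. (\<forall>i. i \<notin> GammaStar A b x \<longrightarrow> p $ i = 0) \<and>
       (\<forall>i\<in>GammaStar A b x. (A $ i) \<bullet> (transpose A *v p) = - ((A $ i) \<bullet> g x)))"

definition tau1 :: "real \<Rightarrow> real^'n::finite^'m::finite \<Rightarrow> real^'m \<Rightarrow> real^'n \<Rightarrow> ereal" where
  "tau1 lam A b x = (let y = A *v x + b in
     if (\<forall>i. y $ i \<le> 0) then \<infinity>
     else ereal (Min {(y $ i)\<^sup>2 / (2 * lam) | i. y $ i > 0}))"

definition tau2 :: "(real^'n \<Rightarrow> real^'n) \<Rightarrow> real \<Rightarrow> real^'n::finite^'m::finite \<Rightarrow> real^'m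
     \<Rightarrow> real^'n \<Rightarrow> ereal" where
  "tau2 g lam A b x = (let p = pstar g A b x in
     if GammaStar A b x = {} \<or> p = 0 then \<infinity>
     else ereal (2 * lam / Max (range (\<lambda>i. \<bar>p $ i\<bar>\<^sup>2))))"

definition Sset :: "real \<Rightarrow> real \<Rightarrow> real^'n::finite^'m::finite \<Rightarrow> real^'m
     \<Rightarrow> real^('n + 'm) \<Rightarrow> 'm set" where
  "Sset tau lam A b w = {i. \<bar>(A *v xpart w + b) $ i + tau * zpart w $ i - sqrt (tau * lam / 2)\<bar>
                           < sqrt (tau * lam / 2)}"

definition Eoset :: "real \<Rightarrow> real \<Rightarrow> real^'n::finite^'m::finite \<Rightarrow> real^'m
     \<Rightarrow> real^('n + 'm) \<Rightarrow> 'm set" where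
  "Eoset tau lam A b w = {i. (A *v xpart w + b) $ i = 0 \<and>
        \<bar>tau * zpart w $ i - sqrt (tau * lam / 2)\<bar> = sqrt (tau * lam / 2)}"

definition Tset :: "real \<Rightarrow> real \<Rightarrow> real^'n::finite^'m::finite \<Rightarrow> real^'m
     \<Rightarrow> real^('n + 'm) \<Rightarrow> 'm set" where
  "Tset tau lam A b w = Sset tau lam A b w \<union> Eoset tau lam A b w"

definition Fv :: "(real^'n \<Rightarrow> real^'n) \<Rightarrow> real^'n::finite^'m::finite \<Rightarrow> real^'m
     \<Rightarrow> real^('n + 'm) \<Rightarrow> 'm set \<Rightarrow> real^('n + 'm)" where
  "Fv g A b w G = (\<chi> k. case k of
      Inl i \<Rightarrow> g (xpart w) $ i + (\<Sum>l\<in>G. A $ l $ i * zpart w $ l)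
    | Inr l \<Rightarrow> (if l \<in> G then (A *v xpart w + b) $ l else zpart w $ l))"

text \<open>The matrix nabla F_mu(w;Gamma); Hf is the Hessian of f\<close>
definition JF :: "(real^'n \<Rightarrow> real^'n^'n) \<Rightarrow> real^'n::finite^'m::finite \<Rightarrow> real
     \<Rightarrow> real^('n + 'm) \<Rightarrow> 'm set \<Rightarrow> real^('n + 'm)^('n + 'm)" where
  "JF Hf A mu w G = (\<chi> r c. case r of
      Inl i \<Rightarrow> (case c of Inl j \<Rightarrow> Hf (xpart w) $ i $ j
                       | Inr l \<Rightarrow> (if l \<in> G then A $ l $ i else 0))
    | Inr l \<Rightarrow> (case c of Inl j \<Rightarrow> (if l \<in> G then A $ l $ j else 0)
                       | Inr l' \<Rightarrow> (if l = l' then (if l \<in> G then - mu else 1) else 0)))"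

text \<open>H(Gamma) at x*, padded with zero rows/columns for indices outside Gamma; it acts on
  the subspace Vsub Gamma = R^n x R^Gamma (z-components outside Gamma vanish).\<close>
definition Hmat :: "(real^'n \<Rightarrow> real^'n^'n) \<Rightarrow> real^'n::finite^'m::finite \<Rightarrow> real^'n
     \<Rightarrow> 'm set \<Rightarrow> real^('n + 'm)^('n + 'm)" where
  "Hmat Hf A x G = (\<chi> r c. case r of
      Inl i \<Rightarrow> (case c of Inl j \<Rightarrow> Hf x $ i $ j
                       | Inr l \<Rightarrow> (if l \<in> G then A $ l $ i else 0))
    | Inr l \<Rightarrow> (case c of Inl j \<Rightarrow> (if l \<in> G then A $ l $ j else 0)
                       | Inr l' \<Rightarrow> 0))"

definition Vsub :: "'m set \<Rightarrow> (real^('n::finite + 'm::finite)) set" where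
  "Vsub G = {v. \<forall>l. l \<notin> G \<longrightarrow> v $ Inr l = 0}"

definition H_nonsingular :: "(real^'n \<Rightarrow> real^'n^'n) \<Rightarrow> real^'n::finite^'m::finite \<Rightarrow> real^'n
     \<Rightarrow> 'm set \<Rightarrow> bool" where
  "H_nonsingular Hf A x G \<longleftrightarrow> (\<forall>v\<in>Vsub G. Hmat Hf A x G *v v = 0 \<longrightarrow> v = 0)"

definition sigma_min_H :: "(real^'n \<Rightarrow> real^'n^'n) \<Rightarrow> real^'n::finite^'m::finite \<Rightarrow> real^'n
     \<Rightarrow> 'm set \<Rightarrow> real" where
  "sigma_min_H Hf A x G = Inf {norm (Hmat Hf A x G *v v) | v. v \<in> Vsub G \<and> norm v = 1}"

definition norm_H :: "(real^'n \<Rightarrow> real^'n^'n) \<Rightarrow> real^'n::finite^'m::finite \<Rightarrow> real^'n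
     \<Rightarrow> 'm set \<Rightarrow> real" where
  "norm_H Hf A x G = onorm (\<lambda>v. Hmat Hf A x G *v v)"

definition C_star :: "(real^'n \<Rightarrow> real^'n^'n) \<Rightarrow> real^'n::finite^'m::finite \<Rightarrow> real^'m
     \<Rightarrow> real^'n \<Rightarrow> real" where
  "C_star Hf A b x = 2 * max 1 (norm_H Hf A x (GammaStar A b x))"

definition c_star :: "(real^'n \<Rightarrow> real^'n^'n) \<Rightarrow> real^'n::finite^'m::finite \<Rightarrow> real^'m
     \<Rightarrow> real^'n \<Rightarrow> real" where
  "c_star Hf A b x = (1/2) * min 1 (Min ((\<lambda>G. sigma_min_H Hf A x G) ` Pow (GammaStar A b x)))"

text \<open>The Newton iteration. State at step k is (w^k, mu_{k-1}).\<close>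
definition mu_next :: "(real^'n \<Rightarrow> real^'n) \<Rightarrow> real^'n::finite^'m::finite \<Rightarrow> real^'m
     \<Rightarrow> real \<Rightarrow> real \<Rightarrow> real \<Rightarrow> real \<Rightarrow> real^('n + 'm) \<Rightarrow> real \<Rightarrow> real" where
  "mu_next g A b tau lam alpha rho w mprev =
     min (alpha * mprev) (rho * norm (Fv g A b w (Tset tau lam A b w)))"

definition newton_dir :: "(real^'n \<Rightarrow> real^'n) \<Rightarrow> (real^'n \<Rightarrow> real^'n^'n)
     \<Rightarrow> real^'n::finite^'m::finite \<Rightarrow> real^'m \<Rightarrow> real \<Rightarrow> real \<Rightarrow> real
     \<Rightarrow> real^('n + 'm) \<Rightarrow> real^('n + 'm)" where
  "newton_dir g Hf A b tau lam mu w =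
     (THE d. JF Hf A mu w (Tset tau lam A b w) *v d = - Fv g A b w (Tset tau lam A b w))"

primrec newton_state :: "(real^'n \<Rightarrow> real^'n) \<Rightarrow> (real^'n \<Rightarrow> real^'n^'n)
     \<Rightarrow> real^'n::finite^'m::finite \<Rightarrow> real^'m \<Rightarrow> real \<Rightarrow> real \<Rightarrow> real \<Rightarrow> real
     \<Rightarrow> real^('n + 'm) \<Rightarrow> real \<Rightarrow> nat \<Rightarrow> (real^('n + 'm)) \<times> real" where
  "newton_state g Hf A b tau lam alpha rho w0 mu0 0 = (w0, mu0)"
| "newton_state g Hf A b tau lam alpha rho w0 mu0 (Suc k) =
     (let w = fst (newton_state g Hf A b tau lam alpha rho w0 mu0 k);
          mu = mu_next g A b tau lam alpha rho w (snd (newton_state g Hf A b tau lam alpha rho w0 mu0 k))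
      in (w + newton_dir g Hf A b tau lam mu w, mu))"

text \<open>w^k, T_k, mu_k, d^k (mu0 is mu_{-1})\<close>
definition newton_w where
  "newton_w g Hf A b tau lam alpha rho w0 mu0 k = fst (newton_state g Hf A b tau lam alpha rho w0 mu0 k)"

definition newton_T where
  "newton_T g Hf A b tau lam alpha rho w0 mu0 k = Tset tau lam A b (newton_w g Hf A b tau lam alpha rho w0 mu0 k)"

definition newton_mu where
  "newton_mu g Hf A b tau lam alpha rho w0 mu0 k =
     mu_next g A b tau lam alpha rho (newton_w g Hf A b tau lam alpha rho w0 mu0 k)
        (snd (newton_state g Hf A b tau lam alpha rho w0 mu0 k))"

definition newton_d where
  "newton_d g Hf A b tau lam alpha rho w0 mu0 k =
     newton_dir g Hf A b tau lam (newton_mu g Hf A b tau lam alpha rho w0 mu0 k)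
        (newton_w g Hf A b tau lam alpha rho w0 mu0 k)"

end

(*
  Near a P-stationary point with tau < tau_*, complementarity is strict: A_i x* + b_i + tau z*_i
  stays away from the boundary of (0, 2 sqrt(tau lam / 2)) for every i. Hence for w close to w* the
  index set T(w) lies in Gamma_* and contains the support of z*, so w* solves the smooth system
  F(.; T(w)) = 0 and the method performs a regularised Newton step for that system. Since
  sigma_min H(Gamma) >= 2 c_* for all Gamma contained in Gamma_*, the Newton matrices are uniformly
  invertible near w*, and c_* |w - w*| <= |F(w; T(w))| <= C_* |w - w*|. The Lipschitz Hessian and
  the choice mu_k <= rho |F| <= rho C_* |w - w*| then give the quadratic error bound, which halves
  the error at each step inside a small ball; the residual estimates follow.
*)

theory Submission
  imports Defs
begin

subsection \<open>Block vectors\<close>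

lemma sum_UNIV_Plus:
  "sum f (UNIV :: ('a::finite + 'b::finite) set) = (\<Sum>i\<in>UNIV. f (Inl i)) + (\<Sum>j\<in>UNIV. f (Inr j))"
  by (subst UNIV_Plus_UNIV[symmetric], subst sum.Plus) (auto simp: o_def)

lemma xpart_join [simp]: "xpart (join u z) = u"
  by (simp add: xpart_def join_def vec_eq_iff)

lemma zpart_join [simp]: "zpart (join u z) = z"
  by (simp add: zpart_def join_def vec_eq_iff)

lemma join_xpart_zpart: "join (xpart w) (zpart w) = w"
  by (simp add: xpart_def zpart_def join_def vec_eq_iff split: sum.split)

lemma join_cases [cases type]:
  obtains u z where "w = join u z"
  by (metis join_xpart_zpart)

lemma join_diff: "join u z - join u' z' = join (u - u') (z - z')"
  by (simp add: join_def vec_eq_iff split: sum.split)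

lemma join_zero [simp]: "join 0 0 = 0"
  by (simp add: join_def vec_eq_iff split: sum.split)

lemma xpart_diff: "xpart (w - w') = xpart w - xpart w'"
  by (simp add: xpart_def vec_eq_iff)

lemma norm_join_power2: "(norm (join u z))\<^sup>2 = (norm u)\<^sup>2 + (norm z)\<^sup>2"
  by (simp add: power2_norm_eq_inner inner_vec_def sum_UNIV_Plus join_def)

lemma norm_join_0_right [simp]: "norm (join u 0) = norm u"
  by (rule power2_eq_imp_eq) (simp_all add: norm_join_power2)

lemma norm_join_0_left [simp]: "norm (join 0 z) = norm z"
  by (rule power2_eq_imp_eq) (simp_all add: norm_join_power2)

lemma norm_join_le: "norm (join u z) \<le> norm u + norm z"
  by (rule power2_le_imp_le) (simp_all add: norm_join_power2 power2_sum)

lemma norm_xpart_le: "norm (xpart w) \<le> norm w"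
  by (metis join_xpart_zpart norm_join_power2 le_add_same_cancel1 zero_le_power2 norm_ge_zero
      power2_le_imp_le)

lemma norm_zpart_le: "norm (zpart w) \<le> norm w"
  by (metis join_xpart_zpart norm_join_power2 le_add_same_cancel2 zero_le_power2 norm_ge_zero
      power2_le_imp_le)

definition vec_restrict :: "'m set \<Rightarrow> real^'m::finite \<Rightarrow> real^'m" where
  "vec_restrict G v = (\<chi> l. if l \<in> G then v $ l else 0)"

lemma vec_restrict_idem [simp]: "vec_restrict G (vec_restrict G v) = vec_restrict G v"
  by (simp add: vec_restrict_def vec_eq_iff)

lemma vec_restrict_add: "vec_restrict G (v + v') = vec_restrict G v + vec_restrict G v'"
  by (simp add: vec_restrict_def vec_eq_iff)

lemma vec_restrict_diff: "vec_restrict G (v - v') = vec_restrict G v - vec_restrict G v'"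
  by (simp add: vec_restrict_def vec_eq_iff)

lemma vec_restrict_subset: "T \<subseteq> G \<Longrightarrow> vec_restrict G (vec_restrict T v) = vec_restrict T v"
  by (auto simp: vec_restrict_def vec_eq_iff)

lemma norm_vec_restrict_mono: "T \<subseteq> G \<Longrightarrow> norm (vec_restrict T v) \<le> norm (vec_restrict G v)"
  by (rule norm_le_componentwise_cart) (auto simp: vec_restrict_def)

lemma norm_vec_restrict_le: "norm (vec_restrict G v) \<le> norm v"
  by (rule norm_le_componentwise_cart) (auto simp: vec_restrict_def)

lemma norm_add_vec_restrict_power2:
  "(norm (vec_restrict G u + (v - vec_restrict G v)))\<^sup>2
     = (norm (vec_restrict G u))\<^sup>2 + (norm (v - vec_restrict G v))\<^sup>2"
  by (rule norm_add_Pythagorean)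
    (auto simp: orthogonal_def vec_restrict_def inner_vec_def intro!: sum.neutral)

lemma scaled_norm_join_split_power2:
  "(c * norm (join u z))\<^sup>2
     = (c * norm (join u (vec_restrict G z)))\<^sup>2 + (c * norm (z - vec_restrict G z))\<^sup>2"
  using norm_add_vec_restrict_power2[of G z z]
  by (simp add: norm_join_power2 power_mult_distrib distrib_left)

subsection \<open>Block forms of the Newton matrices and of the residual\<close>

lemma JF_mult_join:
  "JF Hf A mu w G *v join u z
     = join (Hf (xpart w) *v u + transpose A *v vec_restrict G z)
            (vec_restrict G (A *v u) - mu *\<^sub>R vec_restrict G z + (z - vec_restrict G z))"
  by (simp add: vec_eq_iff JF_def join_def vec_restrict_def matrix_vector_mult_def sum_UNIV_Plus
      transpose_def if_distrib if_distribR sum.If_cases split: sum.split)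

lemma Hmat_mult_join:
  "Hmat Hf A x G *v join u z = join (Hf x *v u + transpose A *v vec_restrict G z) (vec_restrict G (A *v u))"
  by (simp add: vec_eq_iff Hmat_def join_def vec_restrict_def matrix_vector_mult_def sum_UNIV_Plus
      transpose_def if_distrib if_distribR sum.If_cases split: sum.split)

lemma Fv_eq_join:
  "Fv g A b w G
     = join (g (xpart w) + transpose A *v vec_restrict G (zpart w))
            (vec_restrict G (A *v xpart w + b) + (zpart w - vec_restrict G (zpart w)))"
  by (simp add: vec_eq_iff Fv_def join_def vec_restrict_def matrix_vector_mult_def sum_UNIV_Plus
      transpose_def if_distrib if_distribR sum.If_cases split: sum.split)

lemma join_in_Vsub_iff: "join u z \<in> Vsub G \<longleftrightarrow> vec_restrict G z = z"
  by (auto simp: Vsub_def join_def vec_restrict_def vec_eq_iff)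

text \<open>Without the regularisation, the Newton matrix is H(T) on R^n x R^T and the identity on the
  remaining z-components.\<close>
lemma norm_JF0_mult_power2:
  "(norm (JF Hf A 0 w T *v join u z))\<^sup>2
     = (norm (Hmat Hf A (xpart w) T *v join u (vec_restrict T z)))\<^sup>2 + (norm (z - vec_restrict T z))\<^sup>2"
  by (simp add: JF_mult_join Hmat_mult_join norm_join_power2 norm_add_vec_restrict_power2)

lemma JF_mult_diff_JF0:
  "JF Hf A mu w T *v v - JF Hf A 0 w' T *v v
     = join ((Hf (xpart w) - Hf (xpart w')) *v xpart v) (- mu *\<^sub>R vec_restrict T (zpart v))"
  by (cases v) (simp add: JF_mult_join join_diff matrix_vector_mult_diff_rdistrib)

lemma Fv_diff_linearization:
  "Fv g A b w T - Fv g A b w' T - JF Hf A 0 w'' T *v (w - w')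
     = join (g (xpart w) - g (xpart w') - Hf (xpart w'') *v (xpart w - xpart w')) 0"
proof -
  obtain u z u' z' where "w = join u z" "w' = join u' z'" by (metis join_xpart_zpart)
  then show ?thesis
    by (simp add: Fv_eq_join JF_mult_join join_diff matrix_vector_mult_diff_distrib
        vec_restrict_add vec_restrict_diff algebra_simps)
qed

subsection \<open>Norm estimates for the Newton matrices\<close>

lemma sigma_min_H_le:
  assumes "v \<in> Vsub G"
  shows "sigma_min_H Hf A x G * norm v \<le> norm (Hmat Hf A x G *v v)"
proof (cases "v = 0")
  case False
  let ?u = "(1 / norm v) *\<^sub>R v"
  have "?u \<in> Vsub G" "norm ?u = 1" using assms False by (auto simp: Vsub_def)
  then have "sigma_min_H Hf A x G \<le> norm (Hmat Hf A x G *v ?u)"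
    unfolding sigma_min_H_def by (intro cInf_lower bdd_belowI[where m=0]) auto
  also have "\<dots> = norm (Hmat Hf A x G *v v) / norm v"
    by (simp add: matrix_vector_mult_scaleR divide_inverse_commute)
  finally show ?thesis using False by (simp add: field_simps)
qed simp

lemma norm_JF0_lower_bound:
  assumes s: "0 \<le> s" "s \<le> 1" "s \<le> sigma_min_H Hf A (xpart w) T"
  shows "s * norm v \<le> norm (JF Hf A 0 w T *v v)"
proof -
  obtain u z where v: "v = join u z" by (cases v)
  let ?v1 = "join u (vec_restrict T z)" and ?z2 = "z - vec_restrict T z"
  have "s * norm ?v1 \<le> norm (Hmat Hf A (xpart w) T *v ?v1)"
    using sigma_min_H_le[of ?v1 T Hf A "xpart w"] s
    by (meson join_in_Vsub_iff vec_restrict_subset order_refl mult_right_mono norm_ge_zero order_trans)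
  moreover have "s * norm ?z2 \<le> norm ?z2" using s by (simp add: mult_left_le_one_le)
  ultimately have "(s * norm v)\<^sup>2 \<le> (norm (JF Hf A 0 w T *v v))\<^sup>2"
    unfolding v norm_JF0_mult_power2 scaled_norm_join_split_power2[of _ u z T]
    using s by (intro add_mono power_mono) simp_all
  then show ?thesis by (rule power2_le_imp_le) simp
qed

lemma norm_JF0_upper_bound:
  assumes "T \<subseteq> G"
  shows "norm (JF Hf A 0 w T *v v) \<le> max 1 (norm_H Hf A (xpart w) G) * norm v"
proof -
  obtain u z where v: "v = join u z" by (cases v)
  let ?v1 = "join u (vec_restrict T z)" and ?z2 = "z - vec_restrict T z"
  let ?M = "max 1 (norm_H Hf A (xpart w) G)"
  have "norm (Hmat Hf A (xpart w) T *v ?v1) \<le> norm (Hmat Hf A (xpart w) G *v ?v1)"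
  proof (rule power2_le_imp_le)
    show "(norm (Hmat Hf A (xpart w) T *v ?v1))\<^sup>2 \<le> (norm (Hmat Hf A (xpart w) G *v ?v1))\<^sup>2"
      unfolding Hmat_mult_join norm_join_power2 vec_restrict_subset[OF assms] vec_restrict_idem
      by (intro add_left_mono power_mono norm_vec_restrict_mono[OF assms]) simp
  qed simp
  also have "\<dots> \<le> norm_H Hf A (xpart w) G * norm ?v1"
    unfolding norm_H_def by (rule onorm[OF matrix_vector_mul_bounded_linear])
  also have "\<dots> \<le> ?M * norm ?v1" by (simp add: mult_right_mono)
  finally have "norm (Hmat Hf A (xpart w) T *v ?v1) \<le> ?M * norm ?v1" .
  moreover have "norm ?z2 \<le> ?M * norm ?z2" by (simp add: mult_le_cancel_right1)
  ultimately have "(norm (JF Hf A 0 w T *v v))\<^sup>2 \<le> (?M * norm v)\<^sup>2"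
    unfolding v norm_JF0_mult_power2 scaled_norm_join_split_power2[of _ u z T]
    by (intro add_mono power_mono) simp_all
  then show ?thesis by (rule power2_le_imp_le) simp
qed

lemma norm_JF_diff_JF0_le:
  assumes "onorm (\<lambda>v. (Hf (xpart w) - Hf (xpart w')) *v v) \<le> K" "0 \<le> mu"
  shows "norm (JF Hf A mu w T *v v - JF Hf A 0 w' T *v v) \<le> (K + mu) * norm v"
proof -
  have "norm ((Hf (xpart w) - Hf (xpart w')) *v xpart v)
      \<le> onorm (\<lambda>v. (Hf (xpart w) - Hf (xpart w')) *v v) * norm (xpart v)"
    by (rule onorm[OF matrix_vector_mul_bounded_linear])
  also have "\<dots> \<le> K * norm v"
    using assms(1) norm_xpart_le[of v]
    by (meson mult_mono onorm_pos_le[OF matrix_vector_mul_bounded_linear] norm_ge_zero order_trans)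
  finally have "norm ((Hf (xpart w) - Hf (xpart w')) *v xpart v) \<le> K * norm v" .
  moreover have "norm (- mu *\<^sub>R vec_restrict T (zpart v)) \<le> mu * norm v"
    using assms(2) norm_vec_restrict_le[of T "zpart v"] norm_zpart_le[of v]
    by (simp add: mult_left_mono)
  ultimately show ?thesis
    unfolding JF_mult_diff_JF0 distrib_right using norm_join_le add_mono order_trans by blast
qed

lemma lipschitz_hessian_remainder:
  fixes g :: "real^'n::finite \<Rightarrow> real^'n"
  assumes hess: "\<And>x. (g has_derivative (\<lambda>h. Hf x *v h)) (at x)"
    and lip: "\<forall>x\<in>S. \<forall>y\<in>S. onorm (\<lambda>v. (Hf x - Hf y) *v v) \<le> L * dist x y"
    and "convex S" "x \<in> S" "y \<in> S" "0 \<le> L"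
  shows "norm (g y - g x - Hf x *v (y - x)) \<le> L * (norm (y - x))\<^sup>2"
proof -
  let ?S = "closed_segment x y"
  have "?S \<subseteq> S" using assms by (simp add: closed_segment_subset)
  have "norm (g y - g x - (\<lambda>h. Hf x *v h) (y - x)) \<le> norm (y - x) * (L * norm (y - x))"
  proof (rule differentiable_bound_linearization[where S="?S" and f'="\<lambda>x h. Hf x *v h"])
    fix t :: real assume "t \<in> {0..1}"
    moreover have "x + t *\<^sub>R (y - x) = (1 - t) *\<^sub>R x + t *\<^sub>R y" by (simp add: algebra_simps)
    ultimately show "x + t *\<^sub>R (y - x) \<in> ?S" unfolding closed_segment_def by auto
  next
    fix z assume z: "z \<in> ?S"
    have "onorm (\<lambda>v. (Hf z - Hf x) *v v) \<le> L * dist z x"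
      using lip \<open>?S \<subseteq> S\<close> z \<open>x \<in> S\<close> by blast
    also have "\<dots> \<le> L * norm (y - x)"
      using dist_in_closed_segment[OF z] \<open>0 \<le> L\<close>
      by (intro mult_left_mono) (simp_all add: dist_norm norm_minus_commute)
    finally show "onorm ((\<lambda>h. Hf z *v h) - (\<lambda>h. Hf x *v h)) \<le> L * norm (y - x)"
      by (simp add: fun_diff_def matrix_vector_mult_diff_rdistrib)
  qed (auto intro: has_derivative_at_withinI[OF hess])
  then show ?thesis by (simp add: power2_eq_square mult_ac)
qed

lemma invertible_if_norm_lower_bound:
  fixes M :: "real^'k::finite^'k"
  assumes "\<And>v. c * norm v \<le> norm (M *v v)" "c > 0"
  shows "invertible M"
  unfolding invertible_left_inverse matrix_left_invertible_ker
proof (intro allI impI)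
  fix v assume "M *v v = 0"
  then have "c * norm v \<le> 0" using assms(1)[of v] by simp
  then show "v = 0" using assms(2) by (simp add: mult_le_0_iff)
qed

lemma invertible_mult_THE_solution:
  fixes M :: "real^'k::finite^'k"
  assumes "invertible M"
  shows "M *v (THE d. M *v d = y) = y"
proof (rule theI')
  obtain M' where M': "M ** M' = mat 1" "M' ** M = mat 1"
    using assms unfolding invertible_def by auto
  show "\<exists>!d. M *v d = y"
  proof
    show "M *v (M' *v y) = y" by (simp add: matrix_vector_mul_assoc M')
  next
    fix d assume "M *v d = y"
    then have "M' *v (M *v d) = M' *v y" by simp
    then show "d = M' *v y" by (simp add: matrix_vector_mul_assoc M')
  qed
qed

subsection \<open>P-stationarity\<close>

lemma proxset_coordinate_optimal:
  assumes "y \<in> proxset a v"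
  shows "(1/2) * (y$i - v$i)\<^sup>2 + a * (if y$i > 0 then 1 else 0)
           \<le> (1/2) * (t - v$i)\<^sup>2 + a * (if t > 0 then 1 else 0)"
proof -
  define y' where "y' = (\<chi> j. if j = i then t else y $ j)"
  let ?rest = "\<Sum>j\<in>UNIV - {i}. ((y - v) $ j)\<^sup>2" and ?P = "{j. j \<noteq> i \<and> y $ j > 0}"
  have norm_split: "(norm u)\<^sup>2 = (u $ i)\<^sup>2 + (\<Sum>j\<in>UNIV - {i}. (u $ j)\<^sup>2)" for u :: "real^'a"
    unfolding power2_norm_eq_inner inner_vec_def by (simp add: power2_eq_square sum.remove[of UNIV i])
  have pos0_split: "real (pos0 u) = real (card {j. j \<noteq> i \<and> u $ j > 0}) + (if u $ i > 0 then 1 else 0)"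
    for u :: "real^'a"
  proof -
    have "{j. u $ j > 0} = (if u $ i > 0 then insert i else id) {j. j \<noteq> i \<and> u $ j > 0}" by auto
    then show ?thesis by (simp add: pos0_def card_insert_disjoint)
  qed
  have "(\<Sum>j\<in>UNIV - {i}. ((y' - v) $ j)\<^sup>2) = ?rest" by (rule sum.cong) (auto simp: y'_def)
  then have "(norm (y' - v))\<^sup>2 = (t - v $ i)\<^sup>2 + ?rest"
    using norm_split[of "y' - v"] by (simp add: y'_def)
  moreover have "{j. j \<noteq> i \<and> y' $ j > 0} = ?P" by (auto simp: y'_def)
  then have "real (pos0 y') = real (card ?P) + (if t > 0 then 1 else 0)"
    using pos0_split[of y'] by (simp add: y'_def)
  moreover have "(1/2) * (norm (y - v))\<^sup>2 + a * real (pos0 y) \<le> (1/2) * (norm (y' - v))\<^sup>2 + a * real (pos0 y')"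
    using assms unfolding proxset_def by blast
  ultimately show ?thesis
    using norm_split[of "y - v"] pos0_split[of y] by (simp add: algebra_simps)
qed

text \<open>Compare y with the vectors obtained by replacing y_i by y_i + tau z_i or by 0.\<close>
lemma proxset_fixed_point_coordinate:
  assumes P: "y \<in> proxset a (y + tau *\<^sub>R z)" and "a > 0" "tau > 0"
  shows "y$i > 0 \<Longrightarrow> z$i = 0 \<and> 2*a \<le> (y$i)\<^sup>2"
    and "y$i < 0 \<Longrightarrow> z$i = 0"
    and "y$i = 0 \<Longrightarrow> 0 \<le> z$i \<and> (tau * z$i)\<^sup>2 \<le> 2*a"
proof -
  have keep: "(1/2)*(tau * z$i)\<^sup>2 + a * (if y$i > 0 then 1 else 0)
      \<le> a * (if y$i + tau * z$i > 0 then 1 else 0)"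
    using proxset_coordinate_optimal[OF P, of i "y$i + tau * z$i"] by (simp add: power2_eq_square)
  have zero: "(1/2)*(tau * z$i)\<^sup>2 + a * (if y$i > 0 then 1 else 0) \<le> (1/2)*(y$i + tau * z$i)\<^sup>2"
    using proxset_coordinate_optimal[OF P, of i 0] by (simp add: power2_eq_square algebra_simps)
  have tz: "tau * z$i = 0 \<longleftrightarrow> z$i = 0" using \<open>tau > 0\<close> by simp
  show "y$i > 0 \<Longrightarrow> z$i = 0 \<and> 2*a \<le> (y$i)\<^sup>2"
  proof -
    assume "y$i > 0"
    then have "(1/2)*(tau * z$i)\<^sup>2 + a \<le> a * (if y$i + tau * z$i > 0 then 1 else 0)"
      using keep by simp
    moreover have "a * (if y$i + tau * z$i > 0 then 1 else 0) \<le> a" using \<open>a > 0\<close> by simp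
    ultimately have "(tau * z$i)\<^sup>2 \<le> 0" by linarith
    then have "z$i = 0" using tz by simp
    then show ?thesis using zero \<open>y$i > 0\<close> by simp
  qed
  show "y$i < 0 \<Longrightarrow> z$i = 0"
  proof -
    assume neg: "y$i < 0"
    show "z$i = 0"
    proof (cases "y$i + tau * z$i > 0")
      case True
      then have "(y$i + tau * z$i)\<^sup>2 < (tau * z$i)\<^sup>2" using neg by (intro power_strict_mono) auto
      then show ?thesis using zero neg by simp
    qed (use keep neg tz in simp)
  qed
  show "y$i = 0 \<Longrightarrow> 0 \<le> z$i \<and> (tau * z$i)\<^sup>2 \<le> 2*a"
    using keep \<open>tau > 0\<close> \<open>a > 0\<close>
    by (cases "tau * z$i > 0") (auto simp: zero_less_mult_iff split: if_splits)
qed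

lemma transpose_mult_eq_sum: "transpose A *v q = (\<Sum>i\<in>UNIV. q$i *\<^sub>R A$i)"
  by (simp add: vec_eq_iff matrix_vector_mult_def transpose_def sum_component mult.commute)

lemma pstar_eq_multiplier:
  assumes st: "g xs + transpose A *v zs = 0"
    and supp: "\<forall>i. i \<notin> GammaStar A b xs \<longrightarrow> zs$i = 0"
    and fr: "full_row_rank A (GammaStar A b xs)"
  shows "pstar g A b xs = zs"
  unfolding pstar_def
proof (rule the_equality)
  let ?G = "GammaStar A b xs"
  have tz: "transpose A *v zs = - g xs" using st by (simp add: eq_neg_iff_add_eq_0 add.commute)
  then show "(\<forall>i. i \<notin> ?G \<longrightarrow> zs $ i = 0) \<and> (\<forall>i\<in>?G. A $ i \<bullet> (transpose A *v zs) = - (A $ i \<bullet> g xs))"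
    using supp by simp
  fix p assume p: "(\<forall>i. i \<notin> ?G \<longrightarrow> p $ i = 0) \<and> (\<forall>i\<in>?G. A $ i \<bullet> (transpose A *v p) = - (A $ i \<bullet> g xs))"
  define q where "q = p - zs"
  have q0: "\<forall>i. i \<notin> ?G \<longrightarrow> q $ i = 0" using p supp by (simp add: q_def)
  have qG: "\<forall>i\<in>?G. A $ i \<bullet> (transpose A *v q) = 0"
    using p tz
    by (simp add: q_def matrix_vector_mult_diff_distrib inner_diff_right inner_add_right
        del: transpose_matrix_vector)
  have "(transpose A *v q) \<bullet> (transpose A *v q) = (\<Sum>i\<in>UNIV. q$i * ((transpose A *v q) \<bullet> A$i))"
    by (subst (2) transpose_mult_eq_sum) (simp add: inner_sum_right)
  also have "\<dots> = 0" by (rule sum.neutral) (use q0 qG in \<open>auto simp: inner_commute\<close>)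
  finally have "(\<Sum>i\<in>UNIV. q$i *\<^sub>R A$i) = 0" by (simp flip: transpose_mult_eq_sum)
  moreover have "(\<Sum>i\<in>UNIV. q$i *\<^sub>R A$i) = (\<Sum>i\<in>?G. q$i *\<^sub>R A$i)"
    by (rule sum.mono_neutral_right) (use q0 in auto)
  ultimately have "\<forall>i\<in>?G. q$i = 0" using fr unfolding full_row_rank_def by metis
  then show "p = zs" using q0 by (metis q_def vec_eq_iff zero_index eq_iff_diff_eq_0)
qed

lemma Pstationary_strict:
  assumes stat: "Pstationary g A b lam tau xs zs" and "lam > 0" "tau > 0"
    and tau_lt: "ereal tau < min (tau1 lam A b xs) (tau2 g lam A b xs)"
    and fr: "full_row_rank A (GammaStar A b xs)"
  shows "\<And>i. i \<notin> GammaStar A b xs \<Longrightarrow> zs$i = 0"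
    and "\<And>i. (A *v xs + b)$i > 0 \<Longrightarrow> 2*(tau*lam) < ((A *v xs + b)$i)\<^sup>2"
    and "\<And>i. (A *v xs + b)$i = 0 \<Longrightarrow> 0 \<le> zs$i \<and> (tau * zs$i)\<^sup>2 < 2*(tau*lam)"
proof -
  let ?y = "A *v xs + b"
  have st: "g xs + transpose A *v zs = 0" and P: "?y \<in> proxset (tau*lam) (?y + tau *\<^sub>R zs)"
    using stat unfolding Pstationary_def by auto
  note coord = proxset_fixed_point_coordinate[OF P mult_pos_pos[OF \<open>tau > 0\<close> \<open>lam > 0\<close>] \<open>tau > 0\<close>]
  show supp: "zs$i = 0" if "i \<notin> GammaStar A b xs" for i
    using that coord(1,2) by (cases "?y$i > 0") (auto simp: GammaStar_def)
  have t1: "ereal tau < tau1 lam A b xs" and t2: "ereal tau < tau2 g lam A b xs"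
    using tau_lt by auto
  show "2*(tau*lam) < (?y$i)\<^sup>2" if pos: "?y$i > 0" for i
  proof -
    let ?S = "(\<lambda>j. (?y $ j)\<^sup>2 / (2 * lam)) ` {j. ?y $ j > 0}"
    have "tau1 lam A b xs = ereal (Min ?S)"
      using pos unfolding tau1_def Let_def by (auto simp: not_le intro!: arg_cong[where f=Min])
    moreover have "Min ?S \<le> (?y $ i)\<^sup>2 / (2 * lam)" using pos by (intro Min_le) auto
    ultimately have "tau < (?y $ i)\<^sup>2 / (2 * lam)" using t1 by simp
    then show ?thesis using \<open>lam > 0\<close> by (simp add: field_simps)
  qed
  show "0 \<le> zs$i \<and> (tau * zs$i)\<^sup>2 < 2*(tau*lam)" if zero: "?y$i = 0" for i
  proof (cases "zs = 0")
    case False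
    then obtain j where j: "zs$j \<noteq> 0" by (metis vec_eq_iff zero_index)
    let ?M = "Max (range (\<lambda>i. \<bar>zs $ i\<bar>\<^sup>2))"
    have "pstar g A b xs = zs" using pstar_eq_multiplier st supp fr by blast
    moreover have "GammaStar A b xs \<noteq> {}" using j supp by blast
    ultimately have "tau2 g lam A b xs = ereal (2 * lam / ?M)"
      using False unfolding tau2_def Let_def by auto
    then have "tau < 2 * lam / ?M" using t2 by simp
    moreover have "0 < ?M" using j by (intro less_le_trans[OF _ Max_ge[of _ "\<bar>zs $ j\<bar>\<^sup>2"]]) auto
    ultimately have "tau * ?M < 2 * lam" by (simp add: field_simps)
    moreover have "tau * \<bar>zs $ i\<bar>\<^sup>2 \<le> tau * ?M"
      using \<open>tau > 0\<close> by (intro mult_left_mono Max_ge) auto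
    ultimately have "tau * \<bar>zs$i\<bar>\<^sup>2 < 2 * lam" by linarith
    then have "(tau * zs$i)\<^sup>2 < 2*(tau*lam)"
      using \<open>tau > 0\<close> by (simp add: power2_eq_square algebra_simps)
    then show ?thesis using coord(3)[OF zero] by simp
  qed (use \<open>tau > 0\<close> \<open>lam > 0\<close> in simp)
qed

lemma continuous_on_xpart: "continuous_on S (xpart :: real^('n::finite + 'm::finite) \<Rightarrow> real^'n)"
  unfolding xpart_def by (intro continuous_on_vec_lambda continuous_intros)

lemma continuous_on_zpart: "continuous_on S (zpart :: real^('n::finite + 'm::finite) \<Rightarrow> real^'m)"
  unfolding zpart_def by (intro continuous_on_vec_lambda continuous_intros)

lemma tendsto_nhds_if_continuous_on_UNIV:
  fixes f :: "'a::t2_space \<Rightarrow> 'b::topological_space"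
  assumes "continuous_on UNIV f"
  shows "(f \<longlongrightarrow> f a) (nhds a)"
proof -
  have "isCont f a" using assms continuous_on_eq_continuous_at open_UNIV by blast
  then show ?thesis by (simp add: isCont_def tendsto_at_iff_tendsto_nhds)
qed

text \<open>With c = sqrt(tau lam / 2), index i lies in S(w) iff A_i x + b_i + tau z_i lies in (0, 2c).
  At a P-stationary point with tau < tau_* this quantity is > 2c on inactive constraints with positive
  value, < 0 on those with negative value, and in (0, 2c) on active ones with z*_i \<noteq> 0; all three
  are open conditions.\<close>
lemma Tset_eventually_identifies:
  fixes A :: "real^'n::finite^'m::finite" and xs :: "real^'n" and zs :: "real^'m"
  assumes supp: "\<And>i. i \<notin> GammaStar A b xs \<Longrightarrow> zs$i = 0"
    and pos: "\<And>i. (A *v xs + b)$i > 0 \<Longrightarrow> 2*(tau*lam) < ((A *v xs + b)$i)\<^sup>2"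
    and active: "\<And>i. (A *v xs + b)$i = 0 \<Longrightarrow> 0 \<le> zs$i \<and> (tau * zs$i)\<^sup>2 < 2*(tau*lam)"
    and "tau > 0" "lam > 0"
  shows "eventually (\<lambda>w. Tset tau lam A b w \<subseteq> GammaStar A b xs \<and>
                         (\<forall>i. i \<notin> Tset tau lam A b w \<longrightarrow> zs$i = 0)) (nhds (join xs zs))"
proof -
  let ?ys = "A *v xs + b"
  define c where "c = sqrt (tau*lam/2)"
  define y where "y = (\<lambda>i (w::real^('n+'m)). (A *v xpart w + b) $ i)"
  define phi where "phi = (\<lambda>i w. y i w + tau * zpart w $ i)"
  have c: "c > 0" "(2*c)\<^sup>2 = 2*(tau*lam)"
    using \<open>tau > 0\<close> \<open>lam > 0\<close> by (simp_all add: c_def power_mult_distrib)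
  have S_iff: "i \<in> Sset tau lam A b w \<longleftrightarrow> 0 < phi i w \<and> phi i w < 2*c" for i w
    unfolding Sset_def phi_def y_def c_def[symmetric] by (auto simp: abs_less_iff)
  have E_imp: "i \<in> Eoset tau lam A b w \<Longrightarrow> y i w = 0" for i w
    unfolding Eoset_def y_def by auto
  define Q where "Q = (\<lambda>w i. (?ys$i > 0 \<longrightarrow> phi i w > 2*c \<and> y i w > 0) \<and>
      (?ys$i < 0 \<longrightarrow> phi i w < 0 \<and> y i w < 0) \<and>
      (?ys$i = 0 \<and> zs$i \<noteq> 0 \<longrightarrow> 0 < phi i w \<and> phi i w < 2*c))"
  have y_lim: "(y i \<longlongrightarrow> ?ys$i) (nhds (join xs zs))" for i
  proof -
    have "continuous_on UNIV (\<lambda>w::real^('n+'m). A *v xpart w + b)"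
      by (intro continuous_intros continuous_on_compose2[OF matrix_vector_mult_linear_continuous_on
            continuous_on_xpart]) auto
    from tendsto_vec_nth[OF tendsto_nhds_if_continuous_on_UNIV[OF this, of "join xs zs"], of i]
    show ?thesis unfolding y_def by simp
  qed
  have phi_lim: "(phi i \<longlongrightarrow> ?ys$i + tau * zs$i) (nhds (join xs zs))" for i
    unfolding phi_def
    using y_lim[of i] tendsto_nhds_if_continuous_on_UNIV[OF continuous_on_zpart, of "join xs zs"]
    by (auto intro!: tendsto_intros)
  have "eventually (\<lambda>w. Q w i) (nhds (join xs zs))" for i
  proof -
    consider "?ys$i > 0" | "?ys$i < 0" | "?ys$i = 0 \<and> zs$i \<noteq> 0" | "?ys$i = 0 \<and> zs$i = 0" by linarith
    then show ?thesis
    proof cases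
      case 1
      then have "zs$i = 0" using supp by (simp add: GammaStar_def)
      moreover have "(2*c)\<^sup>2 < (?ys$i)\<^sup>2" by (subst c(2)) (rule pos[OF 1])
      then have "2*c < ?ys$i" by (rule power_less_imp_less_base) (use 1 in simp)
      ultimately have "eventually (\<lambda>w. phi i w > 2*c) (nhds (join xs zs))"
        and "eventually (\<lambda>w. y i w > 0) (nhds (join xs zs))"
        using 1 by (simp_all add: order_tendstoD(1)[OF phi_lim] order_tendstoD(1)[OF y_lim])
      then show ?thesis by eventually_elim (use 1 in \<open>simp add: Q_def\<close>)
    next
      case 2
      then have "zs$i = 0" using supp by (simp add: GammaStar_def)
      then have "eventually (\<lambda>w. phi i w < 0) (nhds (join xs zs))"
        and "eventually (\<lambda>w. y i w < 0) (nhds (join xs zs))"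
        using 2 by (simp_all add: order_tendstoD(2)[OF phi_lim] order_tendstoD(2)[OF y_lim])
      then show ?thesis by eventually_elim (use 2 in \<open>simp add: Q_def\<close>)
    next
      case 3
      then have "0 \<le> zs$i" "(tau * zs$i)\<^sup>2 < (2*c)\<^sup>2" unfolding c(2) using active[of i] by simp_all
      then have "0 < tau * zs$i" "tau * zs$i < 2*c"
        using 3 \<open>tau > 0\<close> c(1) power_less_imp_less_base[of "tau * zs$i" 2 "2*c"]
        by (simp_all add: zero_less_mult_iff)
      then have "eventually (\<lambda>w. phi i w > 0) (nhds (join xs zs))"
        and "eventually (\<lambda>w. phi i w < 2*c) (nhds (join xs zs))"
        using 3 by (simp_all add: order_tendstoD(1)[OF phi_lim] order_tendstoD(2)[OF phi_lim])
      then show ?thesis by eventually_elim (use 3 in \<open>simp add: Q_def\<close>)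
    qed (simp add: Q_def)
  qed
  then have "eventually (\<lambda>w. \<forall>i. Q w i) (nhds (join xs zs))" by (rule eventually_all_finite)
  then show ?thesis
  proof (rule eventually_mono)
    fix w assume Qw: "\<forall>i. Q w i"
    show "Tset tau lam A b w \<subseteq> GammaStar A b xs \<and> (\<forall>i. i \<notin> Tset tau lam A b w \<longrightarrow> zs$i = 0)"
    proof (intro conjI subsetI allI impI)
      fix i assume "i \<in> Tset tau lam A b w"
      then have "0 < phi i w \<and> phi i w < 2*c \<or> y i w = 0" using S_iff E_imp unfolding Tset_def by blast
      then show "i \<in> GammaStar A b xs"
        using Qw[rule_format, of i]
        by (cases "?ys$i" "0::real" rule: linorder_cases) (auto simp: Q_def GammaStar_def)
    next
      fix i assume "i \<notin> Tset tau lam A b w"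
      then show "zs$i = 0"
        using Qw[rule_format, of i] supp[of i] S_iff unfolding Q_def GammaStar_def Tset_def by auto
    qed
  qed
qed

lemma newton_w_0: "newton_w g Hf A b tau lam alpha rho w0 mu0 0 = w0"
  by (simp add: newton_w_def)

lemma newton_w_Suc:
  "newton_w g Hf A b tau lam alpha rho w0 mu0 (Suc k)
     = newton_w g Hf A b tau lam alpha rho w0 mu0 k + newton_d g Hf A b tau lam alpha rho w0 mu0 k"
  by (simp add: newton_w_def newton_d_def newton_mu_def Let_def)

lemma newton_state_mu_Suc:
  "snd (newton_state g Hf A b tau lam alpha rho w0 mu0 (Suc k)) = newton_mu g Hf A b tau lam alpha rho w0 mu0 k"
  by (simp add: newton_w_def newton_mu_def Let_def)

subsection \<open>Quadratic convergence in numbers\<close>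

lemma quadratic_residual_rates:
  fixes e R :: "nat \<Rightarrow> real" and a c C \<theta> :: real
  assumes "0 < c" "c \<le> C" "0 < \<theta>"
    and e_nonneg: "\<And>k. 0 \<le> e k" and e_le: "\<And>k. e k \<le> (1/2)^k * a"
    and R_lower: "\<And>k. c * e k \<le> R k" and R_upper: "\<And>k. R k \<le> C * e k"
    and e_Suc: "\<And>k. e (Suc k) \<le> \<theta> / c * (e k)\<^sup>2"
  shows "R (Suc k) \<le> \<theta> * C / c^3 * (R k)\<^sup>2"
    and "1 \<le> k \<Longrightarrow> R k \<le> \<theta> * C^3 / c^3 * 2 powr (2 - 2 * real k) * a\<^sup>2"
proof -
  have "0 < C" using \<open>0 < c\<close> \<open>c \<le> C\<close> by linarith
  have R_Suc: "R (Suc j) \<le> C * (\<theta> / c * (e j)\<^sup>2)" for j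
    using R_upper[of "Suc j"] e_Suc[of j] \<open>0 < C\<close> by (meson mult_left_mono order_trans less_imp_le)
  have "e k \<le> R k / c" using R_lower[of k] \<open>0 < c\<close> by (simp add: field_simps)
  then have "C * (\<theta> / c * (e k)\<^sup>2) \<le> C * (\<theta> / c * (R k / c)\<^sup>2)"
    using e_nonneg[of k] \<open>0 < c\<close> \<open>0 < C\<close> \<open>0 < \<theta>\<close> by (intro mult_left_mono power_mono) auto
  also have "\<dots> = \<theta> * C / c^3 * (R k)\<^sup>2"
    by (simp add: power2_eq_square power3_eq_cube mult_ac)
  finally show "R (Suc k) \<le> \<theta> * C / c^3 * (R k)\<^sup>2" using R_Suc[of k] by linarith
  assume "1 \<le> k"
  then obtain j where k: "k = Suc j" by (cases k) auto
  have "C * (\<theta> / c * (e j)\<^sup>2) \<le> C * (\<theta> / c * ((1/2)^j * a)\<^sup>2)"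
    using e_le[of j] e_nonneg[of j] \<open>0 < c\<close> \<open>0 < C\<close> \<open>0 < \<theta>\<close> by (intro mult_left_mono power_mono) auto
  also have "\<dots> = \<theta> * C / c * ((1/2)^(2*j) * a\<^sup>2)"
    by (simp add: power_mult_distrib power_mult[symmetric] mult.commute)
  also have "\<dots> \<le> \<theta> * C^3 / c^3 * ((1/2)^(2*j) * a\<^sup>2)"
  proof (rule mult_right_mono)
    have "1 \<le> (C/c)\<^sup>2" using \<open>0 < c\<close> \<open>c \<le> C\<close> by (simp add: one_le_power)
    then have "\<theta> * (C/c) * 1 \<le> \<theta> * (C/c) * (C/c)\<^sup>2"
      using \<open>0 < c\<close> \<open>0 < C\<close> \<open>0 < \<theta>\<close> by (intro mult_left_mono) auto
    then show "\<theta> * C / c \<le> \<theta> * C^3 / c^3" by (simp add: power_divide power2_eq_square power3_eq_cube)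
  qed simp
  also have "(1/2::real)^(2*j) = 2 powr (2 - 2 * real k)"
    by (simp add: k powr_minus powr_realpow power_one_over inverse_eq_divide flip: powr_realpow)
  finally show "R k \<le> \<theta> * C^3 / c^3 * 2 powr (2 - 2 * real k) * a\<^sup>2"
    using R_Suc[of j] k by (simp add: mult.assoc)
qed

lemma le_eps_after_log_steps:
  fixes K a \<epsilon> x :: real
  assumes "0 < K" "0 < a" "0 < \<epsilon>"
    and x_le: "x \<le> K * 2 powr (2 - 2 * real k) * a\<^sup>2"
    and k_ge: "\<lceil>log 2 (2 * sqrt K * a) - log 2 (sqrt \<epsilon>)\<rceil> \<le> int k"
  shows "x \<le> \<epsilon>"
proof -
  have "log 2 (2 * sqrt K * a / sqrt \<epsilon>) \<le> real k"
    using k_ge assms(1-3) by (simp add: log_divide ceiling_le_iff)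
  then have "2 * sqrt K * a / sqrt \<epsilon> \<le> 2 powr real k"
    using assms(1-3) by (simp add: log_le_iff)
  then have "(2 * sqrt K * a / sqrt \<epsilon>)\<^sup>2 \<le> (2 powr real k)\<^sup>2"
    using assms(1-3) by (intro power_mono) auto
  moreover have "(2 * sqrt K * a / sqrt \<epsilon>)\<^sup>2 = 4 * K * a\<^sup>2 / \<epsilon>"
    using assms(1-3) by (simp add: power_divide power_mult_distrib)
  moreover have "(2 powr real k)\<^sup>2 = 2 powr (2 * real k)"
    by (simp add: power2_eq_square flip: powr_add)
  ultimately have "4 * K * a\<^sup>2 / \<epsilon> \<le> 2 powr (2 * real k)" by simp
  then have "K * 2 powr (2 - 2 * real k) * a\<^sup>2 \<le> \<epsilon>"
    using \<open>0 < \<epsilon>\<close> by (simp add: powr_diff field_simps)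
  then show ?thesis using x_le by linarith
qed

subsection \<open>Local analysis around a P-stationary point\<close>

locale newton_setting =
  fixes g :: "real^'n::finite \<Rightarrow> real^'n" and Hf :: "real^'n \<Rightarrow> real^'n^'n"
    and A :: "real^'n^'m::finite" and b :: "real^'m"
    and lam tau rho alpha mu0 L r :: real and xs :: "real^'n" and zs :: "real^'m"
  assumes hess: "\<And>x. (g has_derivative (\<lambda>h. Hf x *v h)) (at x)"
    and lam_pos: "lam > 0" and tau_pos: "tau > 0"
    and stat: "Pstationary g A b lam tau xs zs"
    and tau_lt: "ereal tau < min (tau1 lam A b xs) (tau2 g lam A b xs)"
    and full_rank: "full_row_rank A (GammaStar A b xs)"
    and L_pos: "L > 0" and r_pos: "r > 0"
    and lipschitz: "\<forall>x\<in>ball xs r. \<forall>y\<in>ball xs r. onorm (\<lambda>v. (Hf x - Hf y) *v v) \<le> L * dist x y"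
    and rho_pos: "rho > 0" and alpha: "0 < alpha" "alpha < 1"
    and mu0: "0 < mu0" "mu0 \<le> c_star Hf A b xs / 2"
begin

abbreviation "ws \<equiv> join xs zs"
abbreviation "active w \<equiv> Tset tau lam A b w"
abbreviation "residual w \<equiv> Fv g A b w (active w)"
abbreviation "cs \<equiv> c_star Hf A b xs"
abbreviation "Cs \<equiv> C_star Hf A b xs"
abbreviation "th \<equiv> L + 2 * rho * Cs"

lemma cs_pos: "0 < cs"
  using mu0 by simp

lemma cs_le_half: "2 * cs \<le> 1"
  by (simp add: c_star_def)

lemma sigma_min_H_ge_cs: "T \<subseteq> GammaStar A b xs \<Longrightarrow> 2 * cs \<le> sigma_min_H Hf A xs T"
  unfolding c_star_def by (auto intro!: min.coboundedI2 Min_le)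

lemma Cs_eq: "Cs = 2 * max 1 (norm_H Hf A xs (GammaStar A b xs))"
  by (simp add: C_star_def)

lemma th_pos: "0 < th"
  using L_pos rho_pos Cs_eq by (simp add: add_pos_pos)

lemma stationary_eq: "g xs + transpose A *v zs = 0"
  using stat by (simp add: Pstationary_def)

end

locale newton_radius = newton_setting +
  fixes \<delta> :: real
  assumes \<delta>_pos: "0 < \<delta>" and \<delta>_le_r: "\<delta> \<le> r"
    and \<delta>_active: "\<And>w. norm (w - ws) < \<delta> \<Longrightarrow>
        active w \<subseteq> GammaStar A b xs \<and> (\<forall>i. i \<notin> active w \<longrightarrow> zs $ i = 0)"
    and \<delta>_L: "L * \<delta> \<le> cs / 2" and \<delta>_th: "th * \<delta> \<le> cs / 2"

lemma (in newton_setting) newton_radius_exists: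
  "\<exists>\<delta>. newton_radius g Hf A b lam tau rho alpha mu0 L r xs zs \<delta>"
proof -
  have "eventually (\<lambda>w. active w \<subseteq> GammaStar A b xs \<and> (\<forall>i. i \<notin> active w \<longrightarrow> zs $ i = 0)) (nhds ws)"
    using Pstationary_strict[OF stat lam_pos tau_pos tau_lt full_rank] tau_pos lam_pos
    by (intro Tset_eventually_identifies)
  then obtain d where d: "d > 0"
    "\<And>w. dist w ws < d \<Longrightarrow> active w \<subseteq> GammaStar A b xs \<and> (\<forall>i. i \<notin> active w \<longrightarrow> zs $ i = 0)"
    unfolding eventually_nhds_metric by blast
  define \<delta> where "\<delta> = min (min d r) (min (cs / (2 * L)) (cs / (2 * th)))"
  have "\<delta> \<le> cs / (2 * L)" "\<delta> \<le> cs / (2 * th)" by (simp_all add: \<delta>_def)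
  then have "L * \<delta> \<le> cs / 2" "th * \<delta> \<le> cs / 2"
    using L_pos th_pos by (simp_all add: field_simps)
  moreover have "0 < \<delta>" using d r_pos cs_pos L_pos th_pos by (simp add: \<delta>_def)
  ultimately have "newton_radius g Hf A b lam tau rho alpha mu0 L r xs zs \<delta>"
    using d(2) by unfold_locales (auto simp: \<delta>_def dist_norm)
  then show ?thesis ..
qed

context newton_radius
begin

lemma xpart_near:
  assumes "norm (w - ws) < \<delta>"
  shows "norm (xpart w - xs) \<le> norm (w - ws)" and "xpart w \<in> ball xs r"
proof -
  show le: "norm (xpart w - xs) \<le> norm (w - ws)"
    using norm_xpart_le[of "w - ws"] by (simp add: xpart_diff)
  show "xpart w \<in> ball xs r"
    using le assms \<delta>_le_r by (simp add: dist_norm norm_minus_commute)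
qed

lemma residual_at_solution:
  assumes "norm (w - ws) < \<delta>"
  shows "Fv g A b ws (active w) = 0"
proof -
  have "vec_restrict (active w) zs = zs" "vec_restrict (active w) (A *v xs + b) = 0"
    using \<delta>_active[OF assms] by (auto simp: vec_restrict_def vec_eq_iff GammaStar_def)
  then show ?thesis using stationary_eq by (simp add: Fv_eq_join del: transpose_matrix_vector)
qed

lemma taylor_remainder_near:
  assumes "norm (w - ws) < \<delta>" and "p \<in> {xs, xpart w}" "q \<in> {xs, xpart w}"
  shows "norm (g q - g p - Hf p *v (q - p)) \<le> L * (norm (w - ws))\<^sup>2"
proof -
  have "norm (g q - g p - Hf p *v (q - p)) \<le> L * (norm (q - p))\<^sup>2"
    using assms xpart_near(2)[OF assms(1)] r_pos L_pos
    by (intro lipschitz_hessian_remainder[OF hess lipschitz]) auto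
  also have "\<dots> \<le> L * (norm (w - ws))\<^sup>2"
    using assms(2,3) xpart_near(1)[OF assms(1)] L_pos
    by (intro mult_left_mono power_mono) (auto simp: norm_minus_commute)
  finally show ?thesis .
qed

lemma hessian_near:
  assumes "norm (w - ws) < \<delta>"
  shows "onorm (\<lambda>v. (Hf (xpart w) - Hf xs) *v v) \<le> cs / 2"
proof -
  have "onorm (\<lambda>v. (Hf (xpart w) - Hf xs) *v v) \<le> L * dist (xpart w) xs"
    using lipschitz xpart_near(2)[OF assms] r_pos by simp
  also have "\<dots> \<le> L * \<delta>"
    using xpart_near(1)[OF assms] assms L_pos by (intro mult_left_mono) (auto simp: dist_norm)
  finally show ?thesis using \<delta>_L by simp
qed

text \<open>F(w;T(w)) is, up to the Taylor remainder, the Newton matrix at w* applied to w - w*.\<close>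
lemma residual_bounds:
  assumes near: "norm (w - ws) < \<delta>"
  shows "cs * norm (w - ws) \<le> norm (residual w)" and "norm (residual w) \<le> Cs * norm (w - ws)"
proof -
  let ?e = "w - ws" and ?Jlin = "JF Hf A 0 ws (active w)"
  let ?R = "g (xpart w) - g xs - Hf xs *v (xpart w - xs)"
  have F: "residual w = ?Jlin *v ?e + join ?R 0"
    using Fv_diff_linearization[of g A b w "active w" ws Hf ws] residual_at_solution[OF near]
    by (simp add: algebra_simps)
  have "norm ?R \<le> L * (norm ?e)\<^sup>2"
    using taylor_remainder_near[OF near, of xs "xpart w"] by simp
  also have "\<dots> \<le> cs / 2 * norm ?e"
  proof -
    have "L * norm ?e \<le> cs / 2" using near L_pos \<delta>_L mult_left_mono[of "norm ?e" \<delta> L] by linarith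
    from mult_right_mono[OF this norm_ge_zero] show ?thesis by (simp add: power2_eq_square mult.assoc)
  qed
  finally have R: "norm ?R \<le> cs / 2 * norm ?e" .
  have "2 * cs * norm ?e \<le> norm (?Jlin *v ?e)"
    using \<delta>_active[OF near] cs_pos cs_le_half
    by (intro norm_JF0_lower_bound) (auto intro: sigma_min_H_ge_cs)
  moreover have "norm (?Jlin *v ?e) - norm (join ?R 0) \<le> norm (residual w)"
    using norm_triangle_ineq2[of "?Jlin *v ?e" "- join ?R 0"] unfolding F by simp
  ultimately show "cs * norm ?e \<le> norm (residual w)"
    using R mult_nonneg_nonneg[OF less_imp_le[OF cs_pos] norm_ge_zero[of ?e]]
    by (simp add: mult.assoc)
  have "norm (?Jlin *v ?e) \<le> max 1 (norm_H Hf A xs (GammaStar A b xs)) * norm ?e"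
    using norm_JF0_upper_bound[of "active w" "GammaStar A b xs" Hf A ws ?e] \<delta>_active[OF near] by simp
  moreover have "cs / 2 * norm ?e \<le> max 1 (norm_H Hf A xs (GammaStar A b xs)) * norm ?e"
    using cs_le_half by (intro mult_right_mono) auto
  ultimately show "norm (residual w) \<le> Cs * norm ?e"
    using R norm_triangle_ineq[of "?Jlin *v ?e" "join ?R 0"] unfolding F Cs_eq mult.assoc norm_join_0_right by linarith
qed

lemma jacobian_lower_bound:
  assumes near: "norm (w - ws) < \<delta>" and "0 \<le> mu" "mu \<le> cs / 2"
  shows "cs * norm v \<le> norm (JF Hf A mu w (active w) *v v)"
proof -
  have "2 * cs * norm v \<le> norm (JF Hf A 0 ws (active w) *v v)"
    using \<delta>_active[OF near] cs_pos cs_le_half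
    by (intro norm_JF0_lower_bound) (auto intro: sigma_min_H_ge_cs)
  moreover have "norm (JF Hf A mu w (active w) *v v - JF Hf A 0 ws (active w) *v v) \<le> (cs / 2 + mu) * norm v"
    using hessian_near[OF near] \<open>0 \<le> mu\<close> by (intro norm_JF_diff_JF0_le) simp_all
  moreover have "(cs / 2 + mu) * norm v \<le> cs * norm v"
    using \<open>mu \<le> cs / 2\<close> by (intro mult_right_mono) auto
  ultimately show ?thesis
    using norm_triangle_ineq2[of "JF Hf A 0 ws (active w) *v v" "JF Hf A mu w (active w) *v v"]
    by (simp add: norm_minus_commute)
qed

text \<open>The regularisation mu <= rho |F(w)| <= rho C_* |w - w*| is what keeps the step quadratic.\<close>
lemma newton_step_quadratic:
  assumes near: "norm (w - ws) < \<delta>" and mu: "0 \<le> mu" "mu \<le> cs / 2" "mu \<le> rho * norm (residual w)"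
    and sol: "JF Hf A mu w (active w) *v d = - residual w"
  shows "norm (w + d - ws) \<le> th / cs * (norm (w - ws))\<^sup>2"
proof -
  let ?e = "w - ws" and ?J = "JF Hf A mu w (active w)" and ?Jlin = "JF Hf A 0 w (active w)"
  let ?R = "g (xpart w) - g xs - Hf (xpart w) *v (xpart w - xs)"
  let ?Z = "- mu *\<^sub>R vec_restrict (active w) (zpart ?e)"
  have F: "residual w = ?Jlin *v ?e + join ?R 0"
    using Fv_diff_linearization[of g A b w "active w" ws Hf w] residual_at_solution[OF near]
    by (simp add: algebra_simps)
  have J_diff: "?J *v ?e - ?Jlin *v ?e = join 0 ?Z"
    unfolding JF_mult_diff_JF0 by simp
  have "?J *v (w + d - ws) = ?J *v ?e + ?J *v d"
    by (simp add: algebra_simps flip: matrix_vector_right_distrib)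
  also have "\<dots> = (?J *v ?e - ?Jlin *v ?e) - (residual w - ?Jlin *v ?e)"
    unfolding sol by (simp add: algebra_simps)
  also have "\<dots> = join 0 ?Z - join ?R 0"
    unfolding J_diff F by simp
  finally have J: "?J *v (w + d - ws) = join 0 ?Z - join ?R 0" .
  have "norm ?R \<le> L * (norm ?e)\<^sup>2"
    using taylor_remainder_near[OF near, of "xpart w" xs]
    by (simp add: norm_minus_commute matrix_vector_mult_diff_distrib algebra_simps)
  moreover have "norm ?Z \<le> rho * Cs * (norm ?e)\<^sup>2"
  proof -
    have "norm ?Z \<le> mu * norm ?e"
      using mu(1) norm_vec_restrict_le[of "active w" "zpart ?e"] norm_zpart_le[of ?e]
      by (simp add: mult_left_mono)
    also have "\<dots> \<le> rho * (Cs * norm ?e) * norm ?e"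
      using mu(3) residual_bounds(2)[OF near] rho_pos
      by (intro mult_right_mono) (auto intro: order_trans mult_left_mono)
    finally show ?thesis by (simp add: power2_eq_square mult_ac)
  qed
  moreover have "0 \<le> rho * Cs * (norm ?e)\<^sup>2" using rho_pos Cs_eq by simp
  ultimately have "norm (?J *v (w + d - ws)) \<le> th * (norm ?e)\<^sup>2"
    unfolding J using norm_triangle_ineq4[of "join 0 ?Z" "join ?R 0"] by (simp add: algebra_simps)
  then have "cs * norm (w + d - ws) \<le> th * (norm ?e)\<^sup>2"
    using jacobian_lower_bound[OF near mu(1,2)] order_trans by blast
  then show ?thesis using cs_pos by (simp add: field_simps)
qed

context
  fixes w0 assumes w0_near: "dist w0 ws < \<delta>"
begin

abbreviation "iter_w \<equiv> newton_w g Hf A b tau lam alpha rho w0 mu0"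
abbreviation "iter_mu \<equiv> newton_mu g Hf A b tau lam alpha rho w0 mu0"
abbreviation "iter_d \<equiv> newton_d g Hf A b tau lam alpha rho w0 mu0"
abbreviation "mu_prev k \<equiv> snd (newton_state g Hf A b tau lam alpha rho w0 mu0 k)"
abbreviation "iter_J k \<equiv> JF Hf A (iter_mu k) (iter_w k) (active (iter_w k))"

lemma iterate_step:
  assumes near: "norm (iter_w k - ws) < \<delta>" and mu: "0 \<le> mu_prev k" "mu_prev k \<le> cs / 2"
  shows "0 \<le> iter_mu k \<and> iter_mu k \<le> cs / 2 \<and> invertible (iter_J k) \<and>
         iter_J k *v iter_d k = - residual (iter_w k) \<and>
         norm (iter_w (Suc k) - ws) \<le> th / cs * (norm (iter_w k - ws))\<^sup>2"
proof -
  have mu_eq: "iter_mu k = min (alpha * mu_prev k) (rho * norm (residual (iter_w k)))"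
    by (simp add: newton_mu_def mu_next_def newton_w_def)
  have mu_bounds: "0 \<le> iter_mu k" "iter_mu k \<le> cs / 2" "iter_mu k \<le> rho * norm (residual (iter_w k))"
    using mu alpha rho_pos mult_left_le_one_le[of "mu_prev k" alpha] unfolding mu_eq by auto
  have inv: "invertible (iter_J k)"
    using jacobian_lower_bound[OF near mu_bounds(1,2)] cs_pos by (rule invertible_if_norm_lower_bound)
  have sol: "iter_J k *v iter_d k = - residual (iter_w k)"
    unfolding newton_d_def newton_dir_def using invertible_mult_THE_solution[OF inv] by simp
  show ?thesis
    using newton_step_quadratic[OF near mu_bounds sol] mu_bounds inv sol by (simp add: newton_w_Suc)
qed

lemma iterate_invariant:
  "norm (iter_w k - ws) \<le> (1/2)^k * norm (w0 - ws) \<and> 0 \<le> mu_prev k \<and> mu_prev k \<le> cs / 2"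
proof (induction k)
  case 0
  show ?case using mu0 by (simp add: newton_w_0)
next
  case (Suc k)
  have near: "norm (iter_w k - ws) < \<delta>"
    using Suc.IH w0_near mult_left_le_one_le[of "norm (w0 - ws)" "(1/2)^k"]
    by (simp add: dist_norm power_le_one)
  note step = iterate_step[OF near] Suc.IH
  have half: "th / cs * norm (iter_w k - ws) \<le> 1/2"
    using near th_pos cs_pos \<delta>_th mult_left_mono[of "norm (iter_w k - ws)" \<delta> th] by (simp add: field_simps)
  have "norm (iter_w (Suc k) - ws) \<le> (th / cs * norm (iter_w k - ws)) * norm (iter_w k - ws)"
    using step by (simp add: power2_eq_square)
  also have "\<dots> \<le> 1/2 * norm (iter_w k - ws)"
    by (rule mult_right_mono[OF half]) simp
  also have "\<dots> \<le> (1/2)^Suc k * norm (w0 - ws)"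
    using Suc.IH by simp
  finally show ?case unfolding newton_state_mu_Suc using step by simp
qed

lemma iterate_near: "norm (iter_w k - ws) < \<delta>"
  using iterate_invariant[of k] w0_near mult_left_le_one_le[of "norm (w0 - ws)" "(1/2)^k"]
  by (simp add: dist_norm power_le_one)

lemma newton_iterate_well_defined:
  "invertible (iter_J k)" "iter_J k *v iter_d k = - residual (iter_w k)"
  "iter_w (Suc k) = iter_w k + iter_d k"
  using iterate_step[OF iterate_near] iterate_invariant by (auto simp: newton_w_Suc)

lemma newton_error_quadratic: "norm (iter_w (Suc k) - ws) \<le> th / cs * (norm (iter_w k - ws))\<^sup>2"
  using iterate_step[OF iterate_near] iterate_invariant by blast

lemma newton_iterates_tendsto: "iter_w \<longlonglongrightarrow> ws"
proof -
  have "(\<lambda>k. (1/2::real)^k * norm (w0 - ws)) \<longlonglongrightarrow> 0"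
    by (intro tendsto_mult_left_zero LIMSEQ_power_zero) simp
  then have "(\<lambda>k. iter_w k - ws) \<longlonglongrightarrow> 0"
    by (rule Lim_null_comparison[rotated]) (use iterate_invariant in simp)
  then show ?thesis by (simp add: LIM_zero_iff)
qed

lemma newton_steps_tendsto: "iter_d \<longlonglongrightarrow> 0"
  using tendsto_diff[OF LIMSEQ_Suc[OF newton_iterates_tendsto] newton_iterates_tendsto]
  by (simp add: newton_w_Suc)

lemma newton_residual_rates:
  shows "norm (residual (iter_w (Suc k))) \<le> th * Cs / cs^3 * (norm (residual (iter_w k)))\<^sup>2"
    and "1 \<le> k \<Longrightarrow> norm (residual (iter_w k)) \<le> th * Cs^3 / cs^3 * 2 powr (2 - 2 * real k) * (norm (w0 - ws))\<^sup>2"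
proof -
  have "cs \<le> Cs" using cs_le_half Cs_eq by simp
  from quadratic_residual_rates[where c=cs and C=Cs and \<theta>=th and a="norm (w0 - ws)"
      and e="\<lambda>k. norm (iter_w k - ws)" and R="\<lambda>k. norm (residual (iter_w k))",
      OF cs_pos this th_pos norm_ge_zero conjunct1[OF iterate_invariant]
      residual_bounds[OF iterate_near] newton_error_quadratic]
  show "norm (residual (iter_w (Suc k))) \<le> th * Cs / cs^3 * (norm (residual (iter_w k)))\<^sup>2"
    and "1 \<le> k \<Longrightarrow> norm (residual (iter_w k))
           \<le> th * Cs^3 / cs^3 * 2 powr (2 - 2 * real k) * (norm (w0 - ws))\<^sup>2"
    by simp_all
qed

lemma newton_residual_le:
  assumes "0 < \<epsilon>" "w0 \<noteq> ws" "1 \<le> k"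
    and "\<lceil>log 2 (2 * sqrt (th * (Cs / cs) ^ 3) * norm (w0 - ws)) - log 2 (sqrt \<epsilon>)\<rceil> \<le> int k"
  shows "norm (residual (iter_w k)) \<le> \<epsilon>"
  using le_eps_after_log_steps[of "th * (Cs / cs) ^ 3" "norm (w0 - ws)" \<epsilon>] assms
    newton_residual_rates(2)[OF assms(3)] th_pos cs_pos Cs_eq
  by (simp add: power_divide)

end

end

theorem theorem4p2:
  fixes f :: "real^'n::finite \<Rightarrow> real"
    and g :: "real^'n \<Rightarrow> real^'n"
    and Hf :: "real^'n \<Rightarrow> real^'n^'n"
    and A :: "real^'n^'m::finite" and b :: "real^'m"
    and lam tau rho alpha mu0 L :: real
    and xs :: "real^'n" and zs :: "real^'m"
  assumes grad: "\<And>x. (f has_derivative (\<lambda>h. g x \<bullet> h)) (at x)"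
    and hess: "\<And>x. (g has_derivative (\<lambda>h. Hf x *v h)) (at x)"
    and hess_cont: "continuous_on UNIV Hf"
    and lam_pos: "lam > 0"
    and stat: "Pstationary g A b lam tau xs zs"
    and tau_pos: "tau > 0"
    and tau_lt: "ereal tau < min (tau1 lam A b xs) (tau2 g lam A b xs)"
    and hess_nonsing: "invertible (Hf xs)"
    and full_rank: "full_row_rank A (GammaStar A b xs)"
    and H_nonsing: "\<forall>G \<subseteq> GammaStar A b xs. H_nonsingular Hf A xs G"
    and L_pos: "L > 0"
    and lipschitz: "\<exists>r>0. \<forall>x\<in>ball xs r. \<forall>y\<in>ball xs r.
                       onorm (\<lambda>v. (Hf x - Hf y) *v v) \<le> L * dist x y"
    and rho_pos: "rho > 0"
    and alpha: "0 < alpha" "alpha < 1"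
    and mu0: "0 < mu0" "mu0 \<le> c_star Hf A b xs / 2"
  shows "\<exists>\<delta>>0. \<forall>w0. dist w0 (join xs zs) < \<delta> \<longrightarrow>
    (let ws = join xs zs; Cs = C_star Hf A b xs; cs = c_star Hf A b xs;
         th = L + 2 * rho * Cs;
         w = newton_w g Hf A b tau lam alpha rho w0 mu0;
         T = newton_T g Hf A b tau lam alpha rho w0 mu0;
         mu = newton_mu g Hf A b tau lam alpha rho w0 mu0;
         d = newton_d g Hf A b tau lam alpha rho w0 mu0;
         Fk = (\<lambda>k. Fv g A b (w k) (T k))
     in (\<forall>k. invertible (JF Hf A (mu k) (w k) (T k))) \<and>
        (\<forall>k. JF Hf A (mu k) (w k) (T k) *v d k = - Fk k \<and> w (Suc k) = w k + d k) \<and>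
        d \<longlonglongrightarrow> 0 \<and> w \<longlonglongrightarrow> ws \<and>
        (\<forall>k. norm (w (Suc k) - ws) \<le> (th / cs) * (norm (w k - ws))\<^sup>2) \<and>
        (\<forall>k. norm (Fk (Suc k)) \<le> th * Cs / cs ^ 3 * (norm (Fk k))\<^sup>2) \<and>
        (\<forall>k\<ge>1. norm (Fk k) \<le> th * Cs ^ 3 / cs ^ 3 * 2 powr (2 - 2 * real k) * (norm (w0 - ws))\<^sup>2) \<and>
        (\<forall>\<epsilon>>0. w0 \<noteq> ws \<longrightarrow> (\<forall>k. k \<ge> 1 \<and>
            int k \<ge> \<lceil>log 2 (2 * sqrt (th * (Cs / cs) ^ 3) * norm (w0 - ws)) - log 2 (sqrt \<epsilon>)\<rceil>
            \<longrightarrow> norm (Fk k) \<le> \<epsilon>)))"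
proof -
  obtain r where "r > 0" and lip: "\<forall>x\<in>ball xs r. \<forall>y\<in>ball xs r. onorm (\<lambda>v. (Hf x - Hf y) *v v) \<le> L * dist x y"
    using lipschitz by blast
  interpret newton_setting g Hf A b lam tau rho alpha mu0 L r xs zs
    using hess lam_pos tau_pos stat tau_lt full_rank L_pos \<open>r > 0\<close> lip rho_pos alpha mu0
    by unfold_locales
  obtain \<delta> where "newton_radius g Hf A b lam tau rho alpha mu0 L r xs zs \<delta>"
    using newton_radius_exists by blast
  then interpret newton_radius g Hf A b lam tau rho alpha mu0 L r xs zs \<delta> .
  show ?thesis
    unfolding Let_def newton_T_def
    using \<delta>_pos newton_iterate_well_defined newton_iterates_tendsto newton_steps_tendsto
      newton_error_quadratic newton_residual_rates newton_residual_le
    by blast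
qed

end
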